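(* Let $G=(V,E,\gamma,c)$ be a typed DAG task with $M_s\ge1$ cores of each type $s\in S$. Let $u\in V$, let $\pi_1$ and $\pi_2$ be two paths of $G$ both ending at $u$, and let $v$ be a successor of $u$; let $\pi_1'$, $\pi_2'$ be the paths obtained by appending $v$ to $\pi_1$, $\pi_2$ respectively. If $\langle u,\Delta_{\pi_1}(u),\mathcal{R}_{\pi_1}(u)\rangle\succcurlyeq\langle u,\Delta_{\pi_2}(u),\mathcal{R}_{\pi_2}(u)\rangle$, then $\langle v,\Delta_{\pi_1'}(v),\mathcal{R}_{\pi_1'}(v)\rangle\succcurlyeq\langle v,\Delta_{\pi_2'}(v),\mathcal{R}_{\pi_2'}(v)\rangle$.
   Context: A typed DAG task is $G=(V,E,\gamma,c)$ where $(V,E)$ is a finite directed acyclic graph with a unique source and a unique sink, $S$ is a finite set of core types, $\gamma:V\to S$ gives the type of each vertex, and $c:V\to\mathbb{R}_{\ge0}$ gives the WCET of each vertex. $\mathrm{ans}(u)$, $\mathrm{des}(u)$ denote ancestors and descendants of $u$. For $w\in V$, $\mathrm{par}(w)=\{x\in V: x\ne w,\ \gamma(x)=\gamma(w),\ x\notin \mathrm{ans}(w)\cup\mathrm{des}(w)\}$, and $\mathrm{par}(\bot)=\emptyset$. For a path $\pi=(\tau_1,\dots,\tau_k)$ and $s\in S$: $\delta_\pi(\tau_i,s)=\tau_i$ if $\gamma(\tau_i)=s$; $\delta_\pi(\tau_1,s)=\bot$ if $\gamma(\tau_1)\ne s$; $\delta_\pi(\tau_i,s)=\delta_\pi(\tau_{i-1},s)$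 if $\gamma(\tau_i)\ne s$, $i\ge2$. $\Delta_\pi(\tau_i)=(\delta_\pi(\tau_i,s))_{s\in S}$. For $i\ge2$, $\varphi_\pi(\tau_i)=\mathrm{par}(\tau_i)\setminus\mathrm{par}(\delta_\pi(\tau_{i-1},\gamma(\tau_i)))$; $\mathcal{R}_\pi(\tau_1)=c(\tau_1)$ and $\mathcal{R}_\pi(\tau_i)=\mathcal{R}_\pi(\tau_{i-1})+c(\tau_i)+\sum_{x\in\varphi_\pi(\tau_i)}c(x)/M_{\gamma(\tau_i)}$ for $i\ge2$. For a path $\pi$ ending at $u$, its tuple is $\langle u,\Delta_\pi(u),\mathcal{R}_\pi(u)\rangle$. Domination: $\langle w,\Delta_1,\mathcal{R}_1\rangle\succcurlyeq\langle w,\Delta_2,\mathcal{R}_2\rangle$ (same vertex $w$, with $\Delta_j=(\delta_j(w,s))_{s\in S}$) iff (1) $\mathcal{R}_1\ge\mathcal{R}_2$, and (2) for every $s\in S$, either $\delta_1(w,s)=\bot$, or $\delta_1(w,s)\ne\bot$, $\delta_2(w,s)\ne\bot$ and $\mathrm{par}(\delta_1(w,s))\cap\mathrm{des}(\delta_2(w,s))=\emptyset$. *)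

theory Defs
  imports Complex_Main
begin

definition typed_dag_task ::
  "'v set \<Rightarrow> ('v \<times> 'v) set \<Rightarrow> 's set \<Rightarrow> ('v \<Rightarrow> 's) \<Rightarrow> ('v \<Rightarrow> real) \<Rightarrow> bool" where
  "typed_dag_task V E S \<gamma> c \<longleftrightarrow>
     finite V \<and> finite S \<and> E \<subseteq> V \<times> V \<and> acyclic E \<and>
     (\<exists>!x. x \<in> V \<and> (\<forall>y. (y, x) \<notin> E)) \<and>
     (\<exists>!x. x \<in> V \<and> (\<forall>y. (x, y) \<notin> E)) \<and>
     \<gamma> ` V \<subseteq> S \<and> (\<forall>v\<in>V. c v \<ge> 0)"

definition ans :: "('v \<times> 'v) set \<Rightarrow> 'v \<Rightarrow> 'v set" where
  "ans E u = {x. (x, u) \<in> E\<^sup>+}"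

definition des :: "('v \<times> 'v) set \<Rightarrow> 'v \<Rightarrow> 'v set" where
  "des E u = {x. (u, x) \<in> E\<^sup>+}"

definition par :: "'v set \<Rightarrow> ('v \<times> 'v) set \<Rightarrow> ('v \<Rightarrow> 's) \<Rightarrow> 'v \<Rightarrow> 'v set" where
  "par V E \<gamma> w = {x \<in> V. x \<noteq> w \<and> \<gamma> x = \<gamma> w \<and> x \<notin> ans E w \<union> des E w}"

text \<open>par extended to option type, None playing the role of bottom.\<close>
fun par_opt :: "'v set \<Rightarrow> ('v \<times> 'v) set \<Rightarrow> ('v \<Rightarrow> 's) \<Rightarrow> 'v option \<Rightarrow> 'v set" where
  "par_opt V E \<gamma> None = {}"
| "par_opt V E \<gamma> (Some w) = par V E \<gamma> w"

definition is_path :: "'v set \<Rightarrow> ('v \<times> 'v) set \<Rightarrow> 'v list \<Rightarrow> bool" where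
  "is_path V E \<pi> \<longleftrightarrow> \<pi> \<noteq> [] \<and> set \<pi> \<subseteq> V \<and> successively (\<lambda>x y. (x, y) \<in> E) \<pi>"

text \<open>Recursions on the reversed path (head = last vertex tau_i).\<close>
fun deltaR :: "('v \<Rightarrow> 's) \<Rightarrow> 'v list \<Rightarrow> 's \<Rightarrow> 'v option" where
  "deltaR \<gamma> [] s = None"
| "deltaR \<gamma> (x # xs) s = (if \<gamma> x = s then Some x else deltaR \<gamma> xs s)"

fun RR :: "'v set \<Rightarrow> ('v \<times> 'v) set \<Rightarrow> ('v \<Rightarrow> 's) \<Rightarrow> ('v \<Rightarrow> real) \<Rightarrow> ('s \<Rightarrow> nat)
           \<Rightarrow> 'v list \<Rightarrow> real" where
  "RR V E \<gamma> c M [] = 0"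
| "RR V E \<gamma> c M [x] = c x"
| "RR V E \<gamma> c M (x # y # ys) =
     RR V E \<gamma> c M (y # ys) + c x +
     (\<Sum>z \<in> par V E \<gamma> x - par_opt V E \<gamma> (deltaR \<gamma> (y # ys) (\<gamma> x)). c z / real (M (\<gamma> x)))"

definition delta :: "('v \<Rightarrow> 's) \<Rightarrow> 'v list \<Rightarrow> 's \<Rightarrow> 'v option" where
  "delta \<gamma> \<pi> s = deltaR \<gamma> (rev \<pi>) s"

definition Rpath :: "'v set \<Rightarrow> ('v \<times> 'v) set \<Rightarrow> ('v \<Rightarrow> 's) \<Rightarrow> ('v \<Rightarrow> real) \<Rightarrow> ('s \<Rightarrow> nat)
           \<Rightarrow> 'v list \<Rightarrow> real" where
  "Rpath V E \<gamma> c M \<pi> = RR V E \<gamma> c M (rev \<pi>)"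

definition tuple :: "'v set \<Rightarrow> ('v \<times> 'v) set \<Rightarrow> ('v \<Rightarrow> 's) \<Rightarrow> ('v \<Rightarrow> real) \<Rightarrow> ('s \<Rightarrow> nat)
           \<Rightarrow> 'v list \<Rightarrow> 'v \<times> ('s \<Rightarrow> 'v option) \<times> real" where
  "tuple V E \<gamma> c M \<pi> = (last \<pi>, delta \<gamma> \<pi>, Rpath V E \<gamma> c M \<pi>)"

definition dominates :: "'v set \<Rightarrow> ('v \<times> 'v) set \<Rightarrow> 's set \<Rightarrow> ('v \<Rightarrow> 's)
     \<Rightarrow> 'v \<times> ('s \<Rightarrow> 'v option) \<times> real \<Rightarrow> 'v \<times> ('s \<Rightarrow> 'v option) \<times> real \<Rightarrow> bool" where
  "dominates V E S \<gamma> t1 t2 \<longleftrightarrow>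
     (case t1 of (w1, D1, R1) \<Rightarrow> case t2 of (w2, D2, R2) \<Rightarrow>
        w1 = w2 \<and> R1 \<ge> R2 \<and>
        (\<forall>s\<in>S. D1 s = None \<or>
           (\<exists>a b. D1 s = Some a \<and> D2 s = Some b \<and> par V E \<gamma> a \<inter> des E b = {})))"

end

theory Submission
  imports Defs
begin

text \<open>
  Appending \<open>v\<close> changes only the \<open>\<gamma> v\<close>-component of \<open>\<Delta>\<close>, which becomes \<open>v\<close> on both
  paths, and \<open>par v \<inter> des v = {}\<close>; so condition (2) of domination survives. The response
  time grows by the workload of \<open>par v - par (\<delta>\<^sub>i)\<close>, where \<open>\<delta>\<^sub>i\<close> is the last vertex of
  type \<open>\<gamma> v\<close> on \<open>\<pi>\<^sub>i\<close>, and this set is larger for \<open>\<pi>\<^sub>1\<close>: if \<open>\<delta>\<^sub>1 = a\<close> and \<open>\<delta>\<^sub>2 = b\<close>, then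
  \<open>b\<close> is an ancestor of \<open>v\<close>, so a vertex of \<open>par v \<inter> par a\<close> is no ancestor of \<open>b\<close>, by
  domination no descendant of \<open>b\<close> either, and hence lies in \<open>par b\<close>.
\<close>

lemma deltaR_SomeD: "deltaR \<gamma> xs s = Some b \<Longrightarrow> b \<in> set xs \<and> \<gamma> b = s"
  by (induction xs) (auto split: if_splits)

lemma delta_SomeD: "delta \<gamma> \<pi> s = Some b \<Longrightarrow> b \<in> set \<pi> \<and> \<gamma> b = s"
  unfolding delta_def using deltaR_SomeD by fastforce

lemma delta_snoc: "delta \<gamma> (\<pi> @ [v]) s = (if \<gamma> v = s then Some v else delta \<gamma> \<pi> s)"
  by (simp add: delta_def)

lemma Rpath_snoc:
  assumes "\<pi> \<noteq> []"
  shows "Rpath V E \<gamma> c M (\<pi> @ [v]) = Rpath V E \<gamma> c M \<pi> + c v +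
    (\<Sum>z \<in> par V E \<gamma> v - par_opt V E \<gamma> (delta \<gamma> \<pi> (\<gamma> v)). c z / real (M (\<gamma> v)))"
  using assms by (cases "rev \<pi>") (auto simp: Rpath_def delta_def)

lemma successively_rtrancl_last:
  "successively (\<lambda>x y. (x, y) \<in> E) xs \<Longrightarrow> b \<in> set xs \<Longrightarrow> (b, last xs) \<in> E\<^sup>*"
proof (induction xs arbitrary: b rule: induct_list012)
  case (3 x y zs)
  then have "(y, last (y # zs)) \<in> E\<^sup>*" and "(x, y) \<in> E" by auto
  then have "(x, last (y # zs)) \<in> E\<^sup>*" by (simp add: converse_rtrancl_into_rtrancl)
  with 3 show ?case by auto
qed auto

lemma is_path_delta_rtrancl_last:
  "is_path V E \<pi> \<Longrightarrow> delta \<gamma> \<pi> s = Some b \<Longrightarrow> (b, last \<pi>) \<in> E\<^sup>*"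
  unfolding is_path_def by (blast dest: delta_SomeD successively_rtrancl_last)

lemma par_inter_des_self: "par V E \<gamma> w \<inter> des E w = {}"
  by (auto simp: par_def)

lemma par_inter_subset_par_ancestor:
  assumes "(b, w) \<in> E\<^sup>+" and "\<gamma> b = \<gamma> w" and "par V E \<gamma> a \<inter> des E b = {}"
  shows "par V E \<gamma> w \<inter> par V E \<gamma> a \<subseteq> par V E \<gamma> b"
proof
  fix x assume x: "x \<in> par V E \<gamma> w \<inter> par V E \<gamma> a"
  have "x \<notin> des E b" using x assms(3) by auto
  moreover have "x \<noteq> b" and "x \<notin> ans E b"
    using x assms(1) by (auto simp: par_def ans_def dest: trancl_trans)
  ultimately show "x \<in> par V E \<gamma> b"
    using x assms(2) by (auto simp: par_def)
qed

lemma par_diff_par_opt_antimono: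
  assumes "d1 = None \<or> (\<exists>a b. d1 = Some a \<and> d2 = Some b \<and> par V E \<gamma> a \<inter> des E b = {})"
    and "\<And>b. d2 = Some b \<Longrightarrow> (b, w) \<in> E\<^sup>+ \<and> \<gamma> b = \<gamma> w"
  shows "par V E \<gamma> w - par_opt V E \<gamma> d2 \<subseteq> par V E \<gamma> w - par_opt V E \<gamma> d1"
  using assms par_inter_subset_par_ancestor[where w = w] by fastforce

lemma Rpath_snoc_mono:
  assumes "finite V" and "\<forall>x\<in>V. c x \<ge> 0" and "\<pi>1 \<noteq> []" and "\<pi>2 \<noteq> []"
    and "Rpath V E \<gamma> c M \<pi>2 \<le> Rpath V E \<gamma> c M \<pi>1"
    and "par V E \<gamma> v - par_opt V E \<gamma> (delta \<gamma> \<pi>2 (\<gamma> v))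
           \<subseteq> par V E \<gamma> v - par_opt V E \<gamma> (delta \<gamma> \<pi>1 (\<gamma> v))"
  shows "Rpath V E \<gamma> c M (\<pi>2 @ [v]) \<le> Rpath V E \<gamma> c M (\<pi>1 @ [v])"
proof -
  have "finite (par V E \<gamma> v)" using assms(1) by (simp add: par_def)
  then have "(\<Sum>z \<in> par V E \<gamma> v - par_opt V E \<gamma> (delta \<gamma> \<pi>2 (\<gamma> v)). c z / real (M (\<gamma> v)))
      \<le> (\<Sum>z \<in> par V E \<gamma> v - par_opt V E \<gamma> (delta \<gamma> \<pi>1 (\<gamma> v)). c z / real (M (\<gamma> v)))"
    using assms(2,6) by (intro sum_mono2) (auto simp: par_def)
  then show ?thesis
    using assms(3-5) by (simp add: Rpath_snoc)
qed

theorem lemma4: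
  fixes V :: "'v set" and E :: "('v \<times> 'v) set" and S :: "'s set"
    and \<gamma> :: "'v \<Rightarrow> 's" and c :: "'v \<Rightarrow> real" and M :: "'s \<Rightarrow> nat"
    and \<pi>1 \<pi>2 :: "'v list" and u v :: 'v
  assumes "typed_dag_task V E S \<gamma> c"
    and "\<forall>s\<in>S. M s \<ge> 1"
    and "u \<in> V"
    and "is_path V E \<pi>1" and "last \<pi>1 = u"
    and "is_path V E \<pi>2" and "last \<pi>2 = u"
    and "(u, v) \<in> E"
    and "dominates V E S \<gamma> (tuple V E \<gamma> c M \<pi>1) (tuple V E \<gamma> c M \<pi>2)"
  shows "dominates V E S \<gamma> (tuple V E \<gamma> c M (\<pi>1 @ [v])) (tuple V E \<gamma> c M (\<pi>2 @ [v]))"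
proof -
  have "finite V" and "\<forall>x\<in>V. c x \<ge> 0" and "E \<subseteq> V \<times> V" and "\<gamma> ` V \<subseteq> S"
    using assms(1) by (simp_all add: typed_dag_task_def)
  then have "\<gamma> v \<in> S"
    using assms(8) by blast
  have R: "Rpath V E \<gamma> c M \<pi>2 \<le> Rpath V E \<gamma> c M \<pi>1"
   and D: "\<forall>s\<in>S. delta \<gamma> \<pi>1 s = None \<or>
       (\<exists>a b. delta \<gamma> \<pi>1 s = Some a \<and> delta \<gamma> \<pi>2 s = Some b \<and> par V E \<gamma> a \<inter> des E b = {})"
    using assms(9) by (auto simp: dominates_def tuple_def)
  have "(b, v) \<in> E\<^sup>+ \<and> \<gamma> b = \<gamma> v" if "delta \<gamma> \<pi>2 (\<gamma> v) = Some b" for b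
    using that is_path_delta_rtrancl_last[OF assms(6)] delta_SomeD assms(7,8) by fastforce
  with D \<open>\<gamma> v \<in> S\<close> have "par V E \<gamma> v - par_opt V E \<gamma> (delta \<gamma> \<pi>2 (\<gamma> v))
      \<subseteq> par V E \<gamma> v - par_opt V E \<gamma> (delta \<gamma> \<pi>1 (\<gamma> v))"
    by (intro par_diff_par_opt_antimono) auto
  with R \<open>finite V\<close> \<open>\<forall>x\<in>V. c x \<ge> 0\<close> assms(4,6)
  have "Rpath V E \<gamma> c M (\<pi>2 @ [v]) \<le> Rpath V E \<gamma> c M (\<pi>1 @ [v])"
    by (intro Rpath_snoc_mono) (auto simp: is_path_def)
  with D show ?thesis
    by (auto simp: dominates_def tuple_def delta_snoc par_inter_des_self)
qed

end
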